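(* Consider the sparse linear Gaussian model: $S\in\{1,\dots,N\}$, $\mathcal{X}_S=\{\mathbf{x}\in\mathbb{R}^N:\|\mathbf{x}\|_0\le S\}$, $\mathbf{H}\in\mathbb{R}^{M\times N}$ with $\operatorname{spark}(\mathbf{H})>S$, $\sigma>0$, observation $\mathbf{y}=\mathbf{H}\mathbf{x}+\mathbf{n}$, $\mathbf{n}\sim\mathcal{N}(\mathbf{0},\sigma^2\mathbf{I})$, parameter function $g(\mathbf{x})=x_k$ for fixed $k\in[N]$. Let $\mathbf{x}_0\in\mathcal{X}_S$ and let $\mathcal{K}=\{k_1,\dots,k_{|\mathcal{K}|}\}\subseteq[N]$ with $|\mathcal{K}|\le S$. Let $\mathbf{P}=\mathbf{H}_{\mathcal{K}}(\mathbf{H}_{\mathcal{K}})^{\dagger}$ and let $\widetilde{\mathbf{x}}_0\in\mathbb{R}^N$ be the unique vector with $\operatorname{supp}(\widetilde{\mathbf{x}}_0)\subseteq\mathcal{K}$ satisfying $\mathbf{H}\widetilde{\mathbf{x}}_0=\mathbf{P}\mathbf{H}\mathbf{x}_0$. Let $c:\mathcal{X}_S\to\mathbb{R}$ be a bias function such that the partial derivatives $\frac{\partial c(\mathbf{x})}{\partial x_{k_i}}\big|_{\mathbf{x}=\widetilde{\mathbf{x}}_0}$ exist for all $k_i\in\mathcal{K}$, let $\gamma(\mathbf{x})=c(\mathbf{x})+x_k$, and define $\mathbf{b}_{\mathbf{x}_0}\in\mathbb{R}^{|\mathcal{K}|}$ by $(\mathbf{b}_{\mathbf{x}_0})_i=\delta_{k,k_i}+\frac{\partial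 c(\mathbf{x})}{\partial x_{k_i}}\big|_{\mathbf{x}=\widetilde{\mathbf{x}}_0}$. Then $$M(c,\mathbf{x}_0)\ \ge\ \exp\Big(-\tfrac{1}{\sigma^2}\|(\mathbf{I}-\mathbf{P})\mathbf{H}\mathbf{x}_0\|_2^2\Big)\Big[\sigma^2\mathbf{b}_{\mathbf{x}_0}^T(\mathbf{H}_{\mathcal{K}}^T\mathbf{H}_{\mathcal{K}})^{-1}\mathbf{b}_{\mathbf{x}_0}+\gamma^2(\widetilde{\mathbf{x}}_0)\Big]-\gamma^2(\mathbf{x}_0).$$
   Context: $\mathbf{H}_{\mathcal{K}}$ is the submatrix of columns of $\mathbf{H}$ indexed by $\mathcal{K}$; $\dagger$ = pseudoinverse; $\delta$ is the Kronecker delta; $\operatorname{supp}$ = set of indices of nonzero entries. An estimator $\hat g:\mathbb{R}^M\to\mathbb{R}$ has bias $b(\hat g;\mathbf{x})=\mathsf{E}_{\mathbf{x}}\{\hat g(\mathbf{y})\}-x_k$ and variance $v(\hat g;\mathbf{x})$; $M(c,\mathbf{x}_0)$ is the infimum of $v(\hat g;\mathbf{x}_0)$ over all estimators with $v(\hat g;\mathbf{x}_0)<\infty$ and $b(\hat g;\mathbf{x})=c(\mathbf{x})$ for all $\mathbf{x}\in\mathcal{X}_S$ (and $+\infty$ if there is none). *)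

theory Defs
  imports "HOL-Probability.Probability" "Jordan_Normal_Form.Matrix"
begin

text \<open>Vectors in R^N are JNF vectors of dimension N (indices 0..N-1); matrices are JNF
  matrices. Observations y in R^M are functions on {..<M} (elements of a finite product space).\<close>

definition supp_vec :: "real vec \<Rightarrow> nat set" where
  "supp_vec x = {i. i < dim_vec x \<and> x $ i \<noteq> 0}"

definition sparse_set :: "nat \<Rightarrow> nat \<Rightarrow> real vec set" where
  "sparse_set N S = {x \<in> carrier_vec N. card (supp_vec x) \<le> S}"

text \<open>spark(H): smallest number of linearly dependent columns, i.e. the minimal
  number of nonzero entries of a nonzero null-space vector (infinity if there is none).\<close>
definition spark :: "real mat \<Rightarrow> enat" where
  "spark H = (INF x \<in> {x \<in> carrier_vec (dim_col H). x \<noteq> 0\<^sub>v (dim_col H) \<and> H *\<^sub>v x = 0\<^sub>v (dim_row H)}.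
                 enat (card (supp_vec x)))"

definition pinv :: "real mat \<Rightarrow> real mat" where
  "pinv A = (THE B. B \<in> carrier_mat (dim_col A) (dim_row A) \<and> A * B * A = A \<and> B * A * B = B
       \<and> transpose_mat (A * B) = A * B \<and> transpose_mat (B * A) = B * A)"

definition mat_inv :: "real mat \<Rightarrow> real mat" where
  "mat_inv A = (THE B. B \<in> carrier_mat (dim_row A) (dim_row A) \<and> A * B = 1\<^sub>m (dim_row A)
       \<and> B * A = 1\<^sub>m (dim_row A))"

definition cols_sub :: "real mat \<Rightarrow> nat set \<Rightarrow> real mat" where
  "cols_sub H K = mat (dim_row H) (card K) (\<lambda>(r, j). H $$ (r, sorted_list_of_set K ! j))"

definition obs_measure :: "real mat \<Rightarrow> real \<Rightarrow> real vec \<Rightarrow> (nat \<Rightarrow> real) measure" where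
  "obs_measure H \<sigma> x = PiM {..<dim_row H} (\<lambda>i. density lborel (normal_density ((H *\<^sub>v x) $ i) \<sigma>))"

definition expect :: "real mat \<Rightarrow> real \<Rightarrow> real vec \<Rightarrow> ((nat \<Rightarrow> real) \<Rightarrow> real) \<Rightarrow> real" where
  "expect H \<sigma> x g = (\<integral>y. g y \<partial>obs_measure H \<sigma> x)"

definition est_variance :: "real mat \<Rightarrow> real \<Rightarrow> real vec \<Rightarrow> ((nat \<Rightarrow> real) \<Rightarrow> real) \<Rightarrow> real" where
  "est_variance H \<sigma> x g = (\<integral>y. (g y - expect H \<sigma> x g)\<^sup>2 \<partial>obs_measure H \<sigma> x)"

definition admissible_est ::
  "real mat \<Rightarrow> real \<Rightarrow> nat \<Rightarrow> nat \<Rightarrow> (real vec \<Rightarrow> real) \<Rightarrow> real vec \<Rightarrow> ((nat \<Rightarrow> real) \<Rightarrow> real) set" where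
  "admissible_est H \<sigma> S k c x0 = {g.
     g \<in> borel_measurable (obs_measure H \<sigma> x0) \<and>
     integrable (obs_measure H \<sigma> x0) (\<lambda>y. (g y)\<^sup>2) \<and>
     (\<forall>x \<in> sparse_set (dim_col H) S. integrable (obs_measure H \<sigma> x) g \<and>
         expect H \<sigma> x g - x $ k = c x)}"

text \<open>M(c, x0): infimum of variances; +infinity if no admissible estimator.\<close>
definition min_var :: "real mat \<Rightarrow> real \<Rightarrow> nat \<Rightarrow> nat \<Rightarrow> (real vec \<Rightarrow> real) \<Rightarrow> real vec \<Rightarrow> ereal" where
  "min_var H \<sigma> S k c x0 = (INF g \<in> admissible_est H \<sigma> S k c x0. ereal (est_variance H \<sigma> x0 g))"

end

theory Submission
  imports Defs "Jordan_Normal_Form.Determinant"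
begin

(* For an admissible estimator g, the mean of g under the observation law N(Hx, sigma^2 I) is
   gamma(x) for every S-sparse x. Against the reference law N(Hx0, sigma^2 I) these means are
   inner products of g with likelihood ratios L_x, and E[L_x L_x'] = exp(<Hx - Hx0, Hx' - Hx0> / sigma^2).
   Hence E[g^2] >= 2 E[g h] - E[h^2] for every linear combination h of likelihood ratios (a Barankin
   bound). Take h = lambda (gamma(xt) L_xt + sum_i beta_i (L_(xt + t e_(k_i)) - L_xt) / t) with
   lambda = exp(-|r|^2 / sigma^2). The test points are S-sparse because supp xt is contained in K,
   and their images differ from Hx0 by -r + t h_(k_i) with r orthogonal to the columns of H_K, so all
   cross moments factor through exp(|r|^2 / sigma^2). As t -> 0 the difference quotients of gamma
   tend to b, and beta = sigma^2 (H_K^T H_K)^(-1) b yields the quadratic form of the bound. *)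

section \<open>Product Gaussian measures and likelihood ratios\<close>

lemma PiM_density:
  fixes N :: "'i \<Rightarrow> 'a measure" and f :: "'i \<Rightarrow> 'a \<Rightarrow> real"
  assumes I: "finite I"
    and N: "\<And>i. prob_space (N i)"
    and D: "\<And>i. prob_space (density (N i) (f i))"
    and f_meas[measurable]: "\<And>i. f i \<in> borel_measurable (N i)"
    and f_nonneg: "\<And>i x. 0 \<le> f i x"
  shows "PiM I (\<lambda>i. density (N i) (f i)) = density (PiM I N) (\<lambda>x. \<Prod>i\<in>I. f i (x i))"
proof -
  interpret D: product_sigma_finite "\<lambda>i. density (N i) (f i)"
    unfolding product_sigma_finite_def using D prob_space_imp_sigma_finite by blast
  interpret N: product_sigma_finite N
    unfolding product_sigma_finite_def using N prob_space_imp_sigma_finite by blast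
  have meas: "(\<lambda>x. \<Prod>i\<in>I. f i (x i)) \<in> borel_measurable (PiM I N)"
    by measurable
  show ?thesis
  proof (rule D.PiM_eqI[symmetric, OF I])
    show "sets (density (Pi\<^sub>M I N) (\<lambda>x. \<Prod>i\<in>I. f i (x i))) = sets (Pi\<^sub>M I (\<lambda>i. density (N i) (f i)))"
      unfolding sets_density by (rule sets_PiM_cong) simp_all
  next
    fix A assume "\<And>i. i \<in> I \<Longrightarrow> A i \<in> sets (density (N i) (f i))"
    then have A: "\<And>i. i \<in> I \<Longrightarrow> A i \<in> sets (N i)" by simp
    have box: "Pi\<^sub>E I A \<in> sets (PiM I N)"
      using A by (simp add: sets_PiM_I_finite I)
    have "emeasure (density (Pi\<^sub>M I N) (\<lambda>x. \<Prod>i\<in>I. f i (x i))) (Pi\<^sub>E I A)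
        = (\<integral>\<^sup>+ x. ennreal (\<Prod>i\<in>I. f i (x i)) * indicator (Pi\<^sub>E I A) x \<partial>PiM I N)"
      using box meas by (simp add: emeasure_density)
    also have "\<dots> = (\<integral>\<^sup>+ x. (\<Prod>i\<in>I. ennreal (f i (x i)) * indicator (A i) (x i)) \<partial>PiM I N)"
    proof (rule nn_integral_cong)
      fix x assume "x \<in> space (PiM I N)"
      then have "x \<in> extensional I" by (simp add: space_PiM PiE_def)
      then have "indicator (Pi\<^sub>E I A) x = (\<Prod>i\<in>I. indicator (A i) (x i) :: ennreal)"
        using I by (auto simp: indicator_def PiE_def Pi_def)
      then show "ennreal (\<Prod>i\<in>I. f i (x i)) * indicator (Pi\<^sub>E I A) x
          = (\<Prod>i\<in>I. ennreal (f i (x i)) * indicator (A i) (x i))"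
        by (simp add: prod.distrib prod_ennreal f_nonneg)
    qed
    also have "\<dots> = (\<Prod>i\<in>I. (\<integral>\<^sup>+ y. ennreal (f i y) * indicator (A i) y \<partial>N i))"
      by (rule N.product_nn_integral_prod[OF I]) (use A in measurable)
    also have "\<dots> = (\<Prod>i\<in>I. emeasure (density (N i) (f i)) (A i))"
      using A by (intro prod.cong refl) (simp add: emeasure_density)
    finally show "emeasure (density (Pi\<^sub>M I N) (\<lambda>x. \<Prod>i\<in>I. f i (x i))) (Pi\<^sub>E I A)
        = (\<Prod>i\<in>I. emeasure (density (N i) (f i)) (A i))" .
  qed
qed

definition gauss_prod :: "nat \<Rightarrow> real \<Rightarrow> (nat \<Rightarrow> real) \<Rightarrow> (nat \<Rightarrow> real) measure" where
  "gauss_prod M \<sigma> m = PiM {..<M} (\<lambda>i. density lborel (normal_density (m i) \<sigma>))"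

definition gauss_ratio :: "real \<Rightarrow> real \<Rightarrow> real \<Rightarrow> real \<Rightarrow> real" where
  "gauss_ratio \<sigma> m a x = exp (((x - m)\<^sup>2 - (x - a)\<^sup>2) / (2 * \<sigma>\<^sup>2))"

definition lik_ratio :: "nat \<Rightarrow> real \<Rightarrow> (nat \<Rightarrow> real) \<Rightarrow> (nat \<Rightarrow> real) \<Rightarrow> (nat \<Rightarrow> real) \<Rightarrow> real" where
  "lik_ratio M \<sigma> m a y = (\<Prod>i<M. gauss_ratio \<sigma> (m i) (a i) (y i))"

lemma obs_measure_eq_gauss_prod:
  "H \<in> carrier_mat M N \<Longrightarrow> obs_measure H \<sigma> x = gauss_prod M \<sigma> (\<lambda>l. (H *\<^sub>v x) $ l)"
  unfolding obs_measure_def gauss_prod_def by simp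

lemma gauss_prod_cong:
  "(\<And>l. l < M \<Longrightarrow> m l = m' l) \<Longrightarrow> gauss_prod M \<sigma> m = gauss_prod M \<sigma> m'"
  unfolding gauss_prod_def by (intro PiM_cong) simp_all

lemma prob_space_gauss_prod: "\<sigma> > 0 \<Longrightarrow> prob_space (gauss_prod M \<sigma> m)"
  unfolding gauss_prod_def by (intro prob_space_PiM prob_space_normal_density)

lemma normal_density_eq_gauss_ratio:
  "normal_density a \<sigma> x = normal_density m \<sigma> x * gauss_ratio \<sigma> m a x"
proof -
  have "exp (- (x - a)\<^sup>2 / (2 * \<sigma>\<^sup>2))
      = exp (- (x - m)\<^sup>2 / (2 * \<sigma>\<^sup>2)) * exp (((x - m)\<^sup>2 - (x - a)\<^sup>2) / (2 * \<sigma>\<^sup>2))"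
    unfolding mult_exp_exp by (rule arg_cong[where f=exp]) (simp add: diff_divide_distrib)
  then show ?thesis unfolding normal_density_def gauss_ratio_def by simp
qed

lemma lik_ratio_nonneg: "0 \<le> lik_ratio M \<sigma> m a y"
  unfolding lik_ratio_def gauss_ratio_def by (intro prod_nonneg) auto

lemma lik_ratio_measurable[measurable]: "lik_ratio M \<sigma> m a \<in> borel_measurable (gauss_prod M \<sigma> m')"
  unfolding lik_ratio_def gauss_prod_def gauss_ratio_def by measurable

lemma gauss_prod_density:
  assumes \<sigma>: "\<sigma> > 0"
  shows "gauss_prod M \<sigma> a = density (gauss_prod M \<sigma> m) (lik_ratio M \<sigma> m a)"
proof -
  have eq: "density lborel (normal_density (a i) \<sigma>)
      = density (density lborel (normal_density (m i) \<sigma>)) (gauss_ratio \<sigma> (m i) (a i))" for i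
    by (subst density_density_eq)
       (auto simp: gauss_ratio_def normal_density_eq_gauss_ratio[of "a i" \<sigma> _ "m i"] ennreal_mult'
             intro!: arg_cong2[where f=density] ext)
  have "gauss_prod M \<sigma> a
      = PiM {..<M} (\<lambda>i. density (density lborel (normal_density (m i) \<sigma>)) (gauss_ratio \<sigma> (m i) (a i)))"
    unfolding gauss_prod_def eq ..
  also have "\<dots> = density (gauss_prod M \<sigma> m) (lik_ratio M \<sigma> m a)"
    unfolding gauss_prod_def lik_ratio_def
  proof (rule PiM_density)
    fix i
    show "prob_space (density (density lborel (normal_density (m i) \<sigma>)) (gauss_ratio \<sigma> (m i) (a i)))"
      unfolding eq[symmetric] using \<sigma> by (rule prob_space_normal_density)
  qed (use \<sigma> in \<open>auto simp: prob_space_normal_density gauss_ratio_def\<close>)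
  finally show ?thesis .
qed

lemma integral_gauss_prod_change_mean:
  assumes \<sigma>: "\<sigma> > 0" and g: "g \<in> borel_measurable (gauss_prod M \<sigma> m)"
    and g_int: "integrable (gauss_prod M \<sigma> a) g"
  shows "integrable (gauss_prod M \<sigma> m) (\<lambda>y. lik_ratio M \<sigma> m a y * g y)"
    and "(\<integral>y. g y \<partial>gauss_prod M \<sigma> a) = (\<integral>y. lik_ratio M \<sigma> m a y * g y \<partial>gauss_prod M \<sigma> m)"
proof -
  show "integrable (gauss_prod M \<sigma> m) (\<lambda>y. lik_ratio M \<sigma> m a y * g y)"
    using g_int unfolding gauss_prod_density[OF \<sigma>, of M a m]
    by (subst (asm) integrable_density) (auto simp: lik_ratio_nonneg g)
  show "(\<integral>y. g y \<partial>gauss_prod M \<sigma> a) = (\<integral>y. lik_ratio M \<sigma> m a y * g y \<partial>gauss_prod M \<sigma> m)"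
    unfolding gauss_prod_density[OF \<sigma>, of M a m]
    by (subst integral_density) (auto simp: lik_ratio_nonneg g)
qed

lemma lik_ratio_mult:
  assumes "\<sigma> \<noteq> 0"
  shows "lik_ratio M \<sigma> m a y * lik_ratio M \<sigma> m b y
     = exp ((\<Sum>i<M. (a i - m i) * (b i - m i)) / \<sigma>\<^sup>2) * lik_ratio M \<sigma> m (\<lambda>i. a i + b i - m i) y"
proof -
  have "gauss_ratio \<sigma> (m i) (a i) (y i) * gauss_ratio \<sigma> (m i) (b i) (y i)
      = exp ((a i - m i) * (b i - m i) / \<sigma>\<^sup>2) * gauss_ratio \<sigma> (m i) (a i + b i - m i) (y i)" for i
    unfolding gauss_ratio_def mult_exp_exp
    by (rule arg_cong[where f=exp]) (use assms in \<open>simp add: field_simps power2_eq_square\<close>)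
  then show ?thesis
    unfolding lik_ratio_def by (simp add: prod.distrib[symmetric] exp_sum sum_divide_distrib)
qed

lemma integral_lik_ratio_mult:
  assumes \<sigma>: "\<sigma> > 0"
  shows "integrable (gauss_prod M \<sigma> m) (\<lambda>y. lik_ratio M \<sigma> m a y * lik_ratio M \<sigma> m b y)"
    and "(\<integral>y. lik_ratio M \<sigma> m a y * lik_ratio M \<sigma> m b y \<partial>gauss_prod M \<sigma> m)
      = exp ((\<Sum>i<M. (a i - m i) * (b i - m i)) / \<sigma>\<^sup>2)"
proof -
  define c where "c = (\<lambda>i. a i + b i - m i)"
  interpret P: prob_space "gauss_prod M \<sigma> c" using prob_space_gauss_prod[OF \<sigma>] .
  have one: "integrable (gauss_prod M \<sigma> c) (\<lambda>_. 1::real)" by simp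
  have "integrable (gauss_prod M \<sigma> m) (\<lambda>y. lik_ratio M \<sigma> m c y * 1)"
    by (rule integral_gauss_prod_change_mean(1)[OF \<sigma> _ one]) simp
  moreover have "(\<integral>y. lik_ratio M \<sigma> m c y * 1 \<partial>gauss_prod M \<sigma> m) = 1"
    using integral_gauss_prod_change_mean(2)[OF \<sigma> _ one] P.prob_space by simp
  ultimately show "integrable (gauss_prod M \<sigma> m) (\<lambda>y. lik_ratio M \<sigma> m a y * lik_ratio M \<sigma> m b y)"
    and "(\<integral>y. lik_ratio M \<sigma> m a y * lik_ratio M \<sigma> m b y \<partial>gauss_prod M \<sigma> m)
      = exp ((\<Sum>i<M. (a i - m i) * (b i - m i)) / \<sigma>\<^sup>2)"
    unfolding lik_ratio_mult[OF less_imp_neq[OF \<sigma>, symmetric]] c_def by simp_all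
qed

section \<open>A Barankin-type bound\<close>

lemma second_moment_ge_test_function:
  fixes g h :: "'a \<Rightarrow> real"
  assumes "integrable Q (\<lambda>y. (g y)\<^sup>2)" "integrable Q (\<lambda>y. g y * h y)" "integrable Q (\<lambda>y. (h y)\<^sup>2)"
  shows "2 * (\<integral>y. g y * h y \<partial>Q) - (\<integral>y. (h y)\<^sup>2 \<partial>Q) \<le> (\<integral>y. (g y)\<^sup>2 \<partial>Q)"
proof -
  have "0 \<le> (\<integral>y. (g y - h y)\<^sup>2 \<partial>Q)" by (rule integral_nonneg_AE) auto
  also have "(\<lambda>y. (g y - h y)\<^sup>2) = (\<lambda>y. (g y)\<^sup>2 - 2 * (g y * h y) + (h y)\<^sup>2)"
    by (simp add: power2_eq_square algebra_simps)
  also have "(\<integral>y. (g y)\<^sup>2 - 2 * (g y * h y) + (h y)\<^sup>2 \<partial>Q)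
      = (\<integral>y. (g y)\<^sup>2 \<partial>Q) - 2 * (\<integral>y. g y * h y \<partial>Q) + (\<integral>y. (h y)\<^sup>2 \<partial>Q)"
    using assms by simp
  finally show ?thesis by linarith
qed

lemma gauss_second_moment_ge:
  fixes g :: "(nat \<Rightarrow> real) \<Rightarrow> real" and p0 m :: "nat \<Rightarrow> real" and p :: "nat \<Rightarrow> nat \<Rightarrow> real"
    and A :: real and c :: "nat \<Rightarrow> real"
  assumes \<sigma>: "\<sigma> > 0"
    and g_meas[measurable]: "g \<in> borel_measurable (gauss_prod M \<sigma> m)"
    and g_sq: "integrable (gauss_prod M \<sigma> m) (\<lambda>y. (g y)\<^sup>2)"
    and g_int0: "integrable (gauss_prod M \<sigma> p0) g"
    and g_int: "\<And>i. i < n \<Longrightarrow> integrable (gauss_prod M \<sigma> (p i)) g"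
  defines "E \<equiv> \<lambda>a b. exp ((\<Sum>l<M. (a l - m l) * (b l - m l)) / \<sigma>\<^sup>2)"
  shows "(\<integral>y. (g y)\<^sup>2 \<partial>gauss_prod M \<sigma> m) \<ge>
    2 * (A * (\<integral>y. g y \<partial>gauss_prod M \<sigma> p0) + (\<Sum>i<n. c i * (\<integral>y. g y \<partial>gauss_prod M \<sigma> (p i))))
    - (A\<^sup>2 * E p0 p0 + 2 * A * (\<Sum>i<n. c i * E p0 (p i)) + (\<Sum>i<n. \<Sum>j<n. c i * c j * E (p i) (p j)))"
proof -
  let ?Q = "gauss_prod M \<sigma> m"
  define L where "L = lik_ratio M \<sigma> m"
  define h where "h = (\<lambda>y. A * L p0 y + (\<Sum>i<n. c i * L (p i) y))"
  have Lg: "integrable ?Q (\<lambda>y. L a y * g y)" "(\<integral>y. g y \<partial>gauss_prod M \<sigma> a) = (\<integral>y. L a y * g y \<partial>?Q)"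
    if "integrable (gauss_prod M \<sigma> a) g" for a
    using integral_gauss_prod_change_mean[OF \<sigma> g_meas that] unfolding L_def by auto
  have LL: "integrable ?Q (\<lambda>y. L a y * L b y)" "(\<integral>y. L a y * L b y \<partial>?Q) = E a b" for a b
    using integral_lik_ratio_mult[OF \<sigma>, of M m a b] unfolding L_def E_def by auto
  have gh_eq: "g y * h y = A * (L p0 y * g y) + (\<Sum>i<n. c i * (L (p i) y * g y))" for y
    unfolding h_def by (simp add: algebra_simps sum_distrib_left)
  have gh_int: "integrable ?Q (\<lambda>y. g y * h y)"
    unfolding gh_eq using Lg(1)[OF g_int0] Lg(1)[OF g_int]
    by (intro Bochner_Integration.integrable_add Bochner_Integration.integrable_mult_right
          Bochner_Integration.integrable_sum) auto
  have gh_val: "(\<integral>y. g y * h y \<partial>?Q)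
      = A * (\<integral>y. g y \<partial>gauss_prod M \<sigma> p0) + (\<Sum>i<n. c i * (\<integral>y. g y \<partial>gauss_prod M \<sigma> (p i)))"
  proof -
    have "(\<integral>y. g y * h y \<partial>?Q)
        = A * (\<integral>y. L p0 y * g y \<partial>?Q) + (\<Sum>i<n. c i * (\<integral>y. L (p i) y * g y \<partial>?Q))"
      unfolding gh_eq using Lg(1)[OF g_int0] Lg(1)[OF g_int]
      by (subst Bochner_Integration.integral_add)
         (auto intro!: Bochner_Integration.integrable_sum Bochner_Integration.integrable_mult_right
               simp: Bochner_Integration.integral_sum)
    then show ?thesis using Lg(2)[OF g_int0] Lg(2)[OF g_int] by simp
  qed
  have hh_eq: "(h y)\<^sup>2 = A\<^sup>2 * (L p0 y * L p0 y) + 2 * A * (\<Sum>i<n. c i * (L p0 y * L (p i) y))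
      + (\<Sum>i<n. \<Sum>j<n. c i * c j * (L (p i) y * L (p j) y))" for y
  proof -
    have "(\<Sum>i<n. c i * L (p i) y) * (\<Sum>i<n. c i * L (p i) y)
        = (\<Sum>i<n. \<Sum>j<n. c i * c j * (L (p i) y * L (p j) y))"
      by (simp add: sum_product mult_ac)
    moreover have "L p0 y * (\<Sum>i<n. c i * L (p i) y) = (\<Sum>i<n. c i * (L p0 y * L (p i) y))"
      by (simp add: sum_distrib_left mult_ac)
    ultimately show ?thesis
      unfolding h_def by (simp add: power2_eq_square algebra_simps)
  qed
  have hh_int: "integrable ?Q (\<lambda>y. (h y)\<^sup>2)"
    unfolding hh_eq using LL
    by (intro Bochner_Integration.integrable_add Bochner_Integration.integrable_mult_right
          Bochner_Integration.integrable_sum) auto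
  have hh_val: "(\<integral>y. (h y)\<^sup>2 \<partial>?Q)
      = A\<^sup>2 * E p0 p0 + 2 * A * (\<Sum>i<n. c i * E p0 (p i)) + (\<Sum>i<n. \<Sum>j<n. c i * c j * E (p i) (p j))"
    unfolding hh_eq using LL
    by (simp add: Bochner_Integration.integral_add Bochner_Integration.integrable_add
          Bochner_Integration.integrable_sum Bochner_Integration.integral_sum
          Bochner_Integration.integrable_mult_right)
  show ?thesis
    using second_moment_ge_test_function[OF g_sq gh_int hh_int] unfolding gh_val hh_val .
qed

lemma difference_quotient_combination_eq:
  fixes n :: nat and la \<alpha> g0 e t :: real and \<beta> g :: "nat \<Rightarrow> real" and X :: "nat \<Rightarrow> nat \<Rightarrow> real"
  assumes t: "t \<noteq> 0"
  defines "A \<equiv> la * (\<alpha> - (\<Sum>i<n. \<beta> i / t))"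
  defines "c \<equiv> \<lambda>i. la * \<beta> i / t"
  shows "2 * (A * g0 + (\<Sum>i<n. c i * g i))
      - (A\<^sup>2 * e + 2 * A * (\<Sum>i<n. c i * e) + (\<Sum>i<n. \<Sum>j<n. c i * c j * (e * X i j)))
    = 2 * la * (\<alpha> * g0 + (\<Sum>i<n. \<beta> i * ((g i - g0) / t)))
      - la\<^sup>2 * e * (\<alpha>\<^sup>2 + (\<Sum>i<n. \<Sum>j<n. \<beta> i * \<beta> j * ((X i j - 1) / t\<^sup>2)))"
proof -
  define C where "C = (\<Sum>i<n. c i)"
  have AC: "A + C = la * \<alpha>"
    unfolding A_def C_def c_def by (simp add: sum_distrib_left algebra_simps)
  have lin: "A * g0 + (\<Sum>i<n. c i * g i) = la * (\<alpha> * g0 + (\<Sum>i<n. \<beta> i * ((g i - g0) / t)))"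
  proof -
    have "(\<Sum>i<n. c i * g i) - C * g0 = la * (\<Sum>i<n. \<beta> i * ((g i - g0) / t))"
      unfolding C_def c_def
      by (simp add: sum_distrib_left sum_distrib_right sum_subtractf[symmetric] algebra_simps
            diff_divide_distrib)
    then have "A * g0 + (\<Sum>i<n. c i * g i) = (A + C) * g0 + la * (\<Sum>i<n. \<beta> i * ((g i - g0) / t))"
      by (simp add: algebra_simps)
    then show ?thesis unfolding AC by (simp add: algebra_simps)
  qed
  have CC: "(\<Sum>i<n. \<Sum>j<n. c i * c j) = C\<^sup>2"
    unfolding C_def by (simp add: power2_eq_square sum_product)
  have quad: "(\<Sum>i<n. \<Sum>j<n. c i * c j * (e * X i j))
      = e * C\<^sup>2 + e * la\<^sup>2 * (\<Sum>i<n. \<Sum>j<n. \<beta> i * \<beta> j * ((X i j - 1) / t\<^sup>2))"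
  proof -
    have "(\<Sum>i<n. \<Sum>j<n. c i * c j * (e * X i j))
        = e * ((\<Sum>i<n. \<Sum>j<n. c i * c j) + (\<Sum>i<n. \<Sum>j<n. c i * c j * (X i j - 1)))"
      by (simp add: sum_distrib_left sum.distrib[symmetric] algebra_simps)
    moreover have "(\<Sum>i<n. \<Sum>j<n. c i * c j * (X i j - 1))
        = la\<^sup>2 * (\<Sum>i<n. \<Sum>j<n. \<beta> i * \<beta> j * ((X i j - 1) / t\<^sup>2))"
      unfolding c_def using t by (simp add: sum_distrib_left power2_eq_square algebra_simps)
    ultimately show ?thesis unfolding CC by (simp add: algebra_simps)
  qed
  have "(\<Sum>i<n. c i * e) = C * e" unfolding C_def by (simp add: sum_distrib_right)
  then have "A\<^sup>2 * e + 2 * A * (\<Sum>i<n. c i * e) + (\<Sum>i<n. \<Sum>j<n. c i * c j * (e * X i j))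
      = e * (A + C)\<^sup>2 + e * la\<^sup>2 * (\<Sum>i<n. \<Sum>j<n. \<beta> i * \<beta> j * ((X i j - 1) / t\<^sup>2))"
    unfolding quad by (simp add: power2_eq_square algebra_simps)
  then show ?thesis unfolding lin AC by (simp add: power2_eq_square algebra_simps)
qed

lemma tendsto_exp_quotient_at_0:
  fixes a :: real
  shows "((\<lambda>t. (exp (t\<^sup>2 * a) - 1) / t\<^sup>2) \<longlongrightarrow> a) (at 0)"
proof -
  have "((\<lambda>s. exp (s * a)) has_real_derivative exp (0 * a) * a) (at 0)"
    by (auto intro!: derivative_eq_intros)
  then have "((\<lambda>s. (exp (s * a) - 1) / s) \<longlongrightarrow> a) (at 0)"
    unfolding DERIV_def by simp
  moreover have "filterlim (\<lambda>t::real. t\<^sup>2) (at 0) (at 0)"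
    unfolding filterlim_at
    by (auto simp: eventually_at_filter intro!: tendsto_eq_intros)
  ultimately show ?thesis by (rule filterlim_compose)
qed

lemma gauss_second_moment_ge_difference_quotient:
  fixes g :: "(nat \<Rightarrow> real) \<Rightarrow> real" and m a :: "nat \<Rightarrow> real" and v :: "nat \<Rightarrow> nat \<Rightarrow> real"
    and \<beta> :: "nat \<Rightarrow> real" and t :: real
  assumes \<sigma>: "\<sigma> > 0" and t: "t \<noteq> 0"
    and g_meas: "g \<in> borel_measurable (gauss_prod M \<sigma> m)"
    and g_sq: "integrable (gauss_prod M \<sigma> m) (\<lambda>y. (g y)\<^sup>2)"
    and g_int_a: "integrable (gauss_prod M \<sigma> a) g"
    and g_int: "\<And>i. i < n \<Longrightarrow> integrable (gauss_prod M \<sigma> (\<lambda>l. a l + t * v i l)) g"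
    and orth: "\<And>i. i < n \<Longrightarrow> (\<Sum>l<M. (a l - m l) * v i l) = 0"
  defines "la \<equiv> exp (- (\<Sum>l<M. (a l - m l)\<^sup>2) / \<sigma>\<^sup>2)"
    and "G \<equiv> \<lambda>i j. \<Sum>l<M. v i l * v j l"
    and "f \<equiv> \<lambda>i. \<integral>y. g y \<partial>gauss_prod M \<sigma> (\<lambda>l. a l + t * v i l)"
    and "f0 \<equiv> \<integral>y. g y \<partial>gauss_prod M \<sigma> a"
  shows "2 * la * (f0 * f0 + (\<Sum>i<n. \<beta> i * ((f i - f0) / t)))
      - la * (f0\<^sup>2 + (\<Sum>i<n. \<Sum>j<n. \<beta> i * \<beta> j * ((exp (t\<^sup>2 * (G i j / \<sigma>\<^sup>2)) - 1) / t\<^sup>2)))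
    \<le> (\<integral>y. (g y)\<^sup>2 \<partial>gauss_prod M \<sigma> m)"
proof -
  define p where "p i s = (\<lambda>l. a l + s * v i l)" for i s
  define R where "R = (\<Sum>l<M. (a l - m l)\<^sup>2)"
  define e where "e = exp (R / \<sigma>\<^sup>2)"
  define E where "E x y = exp ((\<Sum>l<M. (x l - m l) * (y l - m l)) / \<sigma>\<^sup>2)" for x y
  have la_e: "la * e = 1"
    unfolding la_def e_def R_def by (simp add: mult_exp_exp add_divide_distrib[symmetric])
  have cross: "(\<Sum>l<M. (p i s l - m l) * (p j s' l - m l)) = R + s * s' * G i j"
    if "i < n" "j < n" for i j s s'
  proof -
    have "(\<Sum>l<M. (p i s l - m l) * (p j s' l - m l))
        = (\<Sum>l<M. (a l - m l)\<^sup>2 + s' * ((a l - m l) * v j l) + s * ((a l - m l) * v i l)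
            + s * s' * (v i l * v j l))"
      unfolding p_def by (intro sum.cong) (simp_all add: power2_eq_square algebra_simps)
    then show ?thesis
      using orth that by (simp add: sum.distrib sum_distrib_left[symmetric] R_def G_def)
  qed
  have E_aa: "E a a = e"
    unfolding E_def e_def R_def by (simp add: power2_eq_square)
  have E_ap: "E a (p i t) = e" if "i < n" for i
    using cross[OF that that, of 0 t] unfolding E_def e_def p_def by simp
  have E_pp: "E (p i t) (p j t) = e * exp (t\<^sup>2 * (G i j / \<sigma>\<^sup>2))" if "i < n" "j < n" for i j
    using cross[OF that, of t t] unfolding E_def e_def
    by (simp add: mult_exp_exp add_divide_distrib power2_eq_square)
  (* A L_a + sum_i c_i L_(p i t) = la (f0 L_a + sum_i beta_i (L_(p i t) - L_a) / t) *)
  define A where "A = la * (f0 - (\<Sum>i<n. \<beta> i / t))"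
  define c where "c i = la * \<beta> i / t" for i
  have "(\<integral>y. (g y)\<^sup>2 \<partial>gauss_prod M \<sigma> m) \<ge> 2 * (A * f0 + (\<Sum>i<n. c i * f i))
      - (A\<^sup>2 * E a a + 2 * A * (\<Sum>i<n. c i * E a (p i t)) + (\<Sum>i<n. \<Sum>j<n. c i * c j * E (p i t) (p j t)))"
    unfolding f0_def f_def E_def p_def
    by (rule gauss_second_moment_ge[OF \<sigma> g_meas g_sq g_int_a g_int])
  also have "(\<Sum>i<n. c i * E a (p i t)) = (\<Sum>i<n. c i * e)"
    by (intro sum.cong) (simp_all add: E_ap)
  also have "(\<Sum>i<n. \<Sum>j<n. c i * c j * E (p i t) (p j t))
      = (\<Sum>i<n. \<Sum>j<n. c i * c j * (e * exp (t\<^sup>2 * (G i j / \<sigma>\<^sup>2))))"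
    by (intro sum.cong) (simp_all add: E_pp)
  also have "2 * (A * f0 + (\<Sum>i<n. c i * f i))
      - (A\<^sup>2 * E a a + 2 * A * (\<Sum>i<n. c i * e)
         + (\<Sum>i<n. \<Sum>j<n. c i * c j * (e * exp (t\<^sup>2 * (G i j / \<sigma>\<^sup>2)))))
    = 2 * la * (f0 * f0 + (\<Sum>i<n. \<beta> i * ((f i - f0) / t)))
      - la\<^sup>2 * e * (f0\<^sup>2 + (\<Sum>i<n. \<Sum>j<n. \<beta> i * \<beta> j * ((exp (t\<^sup>2 * (G i j / \<sigma>\<^sup>2)) - 1) / t\<^sup>2)))"
    unfolding E_aa A_def c_def
    by (subst difference_quotient_combination_eq[OF t]) (simp add: power2_eq_square)
  also have "la\<^sup>2 * e = la" using la_e by (simp add: power2_eq_square)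
  finally show ?thesis .
qed

lemma gauss_second_moment_ge_derivative:
  fixes g :: "(nat \<Rightarrow> real) \<Rightarrow> real" and m a :: "nat \<Rightarrow> real" and v :: "nat \<Rightarrow> nat \<Rightarrow> real"
    and d \<beta> :: "nat \<Rightarrow> real"
  assumes \<sigma>: "\<sigma> > 0"
    and g_meas: "g \<in> borel_measurable (gauss_prod M \<sigma> m)"
    and g_sq: "integrable (gauss_prod M \<sigma> m) (\<lambda>y. (g y)\<^sup>2)"
    and g_int_a: "integrable (gauss_prod M \<sigma> a) g"
    and g_int: "\<And>i t. i < n \<Longrightarrow> integrable (gauss_prod M \<sigma> (\<lambda>l. a l + t * v i l)) g"
    and deriv: "\<And>i. i < n \<Longrightarrow>
      ((\<lambda>t. \<integral>y. g y \<partial>gauss_prod M \<sigma> (\<lambda>l. a l + t * v i l)) has_real_derivative d i) (at 0)"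
    and orth: "\<And>i. i < n \<Longrightarrow> (\<Sum>l<M. (a l - m l) * v i l) = 0"
  shows "exp (- (\<Sum>l<M. (a l - m l)\<^sup>2) / \<sigma>\<^sup>2)
      * (2 * (\<Sum>i<n. \<beta> i * d i) - (\<Sum>i<n. \<Sum>j<n. \<beta> i * \<beta> j * (\<Sum>l<M. v i l * v j l)) / \<sigma>\<^sup>2
         + (\<integral>y. g y \<partial>gauss_prod M \<sigma> a)\<^sup>2)
    \<le> (\<integral>y. (g y)\<^sup>2 \<partial>gauss_prod M \<sigma> m)"
proof -
  define f where "f i t = (\<integral>y. g y \<partial>gauss_prod M \<sigma> (\<lambda>l. a l + t * v i l))" for i t
  define f0 where "f0 = (\<integral>y. g y \<partial>gauss_prod M \<sigma> a)"
  define la where "la = exp (- (\<Sum>l<M. (a l - m l)\<^sup>2) / \<sigma>\<^sup>2)"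
  define G where "G i j = (\<Sum>l<M. v i l * v j l)" for i j
  define F where "F t = 2 * la * (f0 * f0 + (\<Sum>i<n. \<beta> i * ((f i t - f0) / t)))
      - la * (f0\<^sup>2 + (\<Sum>i<n. \<Sum>j<n. \<beta> i * \<beta> j * ((exp (t\<^sup>2 * (G i j / \<sigma>\<^sup>2)) - 1) / t\<^sup>2)))"
    for t
  have F_le: "F t \<le> (\<integral>y. (g y)\<^sup>2 \<partial>gauss_prod M \<sigma> m)" if "t \<noteq> 0" for t
    unfolding F_def f_def f0_def la_def G_def
    by (rule gauss_second_moment_ge_difference_quotient[OF \<sigma> that g_meas g_sq g_int_a g_int orth])
  have lim_f: "((\<lambda>t. (f i t - f0) / t) \<longlongrightarrow> d i) (at 0)" if "i < n" for i
    using deriv[OF that] unfolding DERIV_def by (simp add: f_def f0_def)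
  have "(F \<longlongrightarrow> 2 * la * (f0 * f0 + (\<Sum>i<n. \<beta> i * d i))
      - la * (f0\<^sup>2 + (\<Sum>i<n. \<Sum>j<n. \<beta> i * \<beta> j * (G i j / \<sigma>\<^sup>2)))) (at 0)"
    unfolding F_def by (intro tendsto_intros lim_f tendsto_exp_quotient_at_0) auto
  then have "2 * la * (f0 * f0 + (\<Sum>i<n. \<beta> i * d i))
      - la * (f0\<^sup>2 + (\<Sum>i<n. \<Sum>j<n. \<beta> i * \<beta> j * (G i j / \<sigma>\<^sup>2))) \<le> (\<integral>y. (g y)\<^sup>2 \<partial>gauss_prod M \<sigma> m)"
    by (rule tendsto_upperbound) (auto simp: eventually_at_filter F_le)
  moreover have "(\<Sum>i<n. \<Sum>j<n. \<beta> i * \<beta> j * (G i j / \<sigma>\<^sup>2))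
      = (\<Sum>i<n. \<Sum>j<n. \<beta> i * \<beta> j * G i j) / \<sigma>\<^sup>2"
    by (simp add: sum_divide_distrib)
  ultimately show ?thesis
    unfolding f0_def[symmetric] la_def[symmetric] G_def[symmetric]
    by (simp add: power2_eq_square algebra_simps)
qed

lemma scalar_prod_eq_sum_lessThan:
  "w \<in> carrier_vec n \<Longrightarrow> u \<bullet> w = (\<Sum>l<n. u $ l * w $ l)"
  by (simp add: scalar_prod_def atLeast0LessThan)

lemma est_variance_eq_second_moment:
  assumes \<sigma>: "\<sigma> > 0" and H: "H \<in> carrier_mat M N"
    and g: "integrable (obs_measure H \<sigma> x) g" and g_sq: "integrable (obs_measure H \<sigma> x) (\<lambda>y. (g y)\<^sup>2)"
  shows "est_variance H \<sigma> x g = (\<integral>y. (g y)\<^sup>2 \<partial>obs_measure H \<sigma> x) - (expect H \<sigma> x g)\<^sup>2"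
proof -
  interpret Q: prob_space "obs_measure H \<sigma> x"
    unfolding obs_measure_eq_gauss_prod[OF H] by (rule prob_space_gauss_prod[OF \<sigma>])
  show ?thesis
    using Q.variance_eq[OF g g_sq] unfolding est_variance_def expect_def .
qed

lemma admissible_est_variance_ge:
  fixes H :: "real mat" and e :: "nat \<Rightarrow> real vec" and d \<beta> :: "nat \<Rightarrow> real"
  assumes H: "H \<in> carrier_mat M N" and \<sigma>: "\<sigma> > 0"
    and g: "g \<in> admissible_est H \<sigma> S k c x0"
    and x0: "x0 \<in> sparse_set N S" and xt: "xt \<in> sparse_set N S"
    and e: "\<And>i. i < n \<Longrightarrow> e i \<in> carrier_vec N"
    and line: "\<And>i t. i < n \<Longrightarrow> xt + t \<cdot>\<^sub>v e i \<in> sparse_set N S"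
    and deriv: "\<And>i. i < n \<Longrightarrow>
      ((\<lambda>t. c (xt + t \<cdot>\<^sub>v e i) + (xt + t \<cdot>\<^sub>v e i) $ k) has_real_derivative d i) (at 0)"
    and orth: "\<And>i. i < n \<Longrightarrow> (H *\<^sub>v e i) \<bullet> (H *\<^sub>v x0 - H *\<^sub>v xt) = 0"
  shows "exp (- ((H *\<^sub>v x0 - H *\<^sub>v xt) \<bullet> (H *\<^sub>v x0 - H *\<^sub>v xt)) / \<sigma>\<^sup>2)
      * (2 * (\<Sum>i<n. \<beta> i * d i) - (\<Sum>i<n. \<Sum>j<n. \<beta> i * \<beta> j * ((H *\<^sub>v e i) \<bullet> (H *\<^sub>v e j))) / \<sigma>\<^sup>2
         + (c xt + xt $ k)\<^sup>2)
      - (c x0 + x0 $ k)\<^sup>2 \<le> est_variance H \<sigma> x0 g"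
proof -
  define m where "m = (\<lambda>l. (H *\<^sub>v x0) $ l)"
  define a where "a = (\<lambda>l. (H *\<^sub>v xt) $ l)"
  define v where "v i = (\<lambda>l. (H *\<^sub>v e i) $ l)" for i
  have x0c: "x0 \<in> carrier_vec N" and xtc: "xt \<in> carrier_vec N"
    using x0 xt unfolding sparse_set_def by auto
  have obs: "obs_measure H \<sigma> x = gauss_prod M \<sigma> (\<lambda>l. (H *\<^sub>v x) $ l)" for x
    using obs_measure_eq_gauss_prod[OF H] .
  have g_meas: "g \<in> borel_measurable (gauss_prod M \<sigma> m)"
    and g_sq: "integrable (gauss_prod M \<sigma> m) (\<lambda>y. (g y)\<^sup>2)"
    using g unfolding admissible_est_def obs m_def by auto
  have mean: "integrable (gauss_prod M \<sigma> (\<lambda>l. (H *\<^sub>v x) $ l)) g"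
    "(\<integral>y. g y \<partial>gauss_prod M \<sigma> (\<lambda>l. (H *\<^sub>v x) $ l)) = c x + x $ k"
    if "x \<in> sparse_set N S" for x
    using g that H unfolding admissible_est_def obs expect_def by auto
  have line_mean: "gauss_prod M \<sigma> (\<lambda>l. a l + t * v i l) = gauss_prod M \<sigma> (\<lambda>l. (H *\<^sub>v (xt + t \<cdot>\<^sub>v e i)) $ l)"
    if "i < n" for i t
    using H xtc e[OF that]
    by (intro gauss_prod_cong) (simp add: a_def v_def mult_add_distrib_mat_vec[OF H] mult_mat_vec[OF H])
  have sum_eq: "(\<Sum>l<M. (a l - m l) * v i l) = - ((H *\<^sub>v e i) \<bullet> (H *\<^sub>v x0 - H *\<^sub>v xt))" if "i < n" for i
    using H x0c xtc
    by (simp add: scalar_prod_eq_sum_lessThan[of _ M] a_def m_def v_def sum_negf[symmetric] algebra_simps)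
  have "exp (- (\<Sum>l<M. (a l - m l)\<^sup>2) / \<sigma>\<^sup>2)
      * (2 * (\<Sum>i<n. \<beta> i * d i) - (\<Sum>i<n. \<Sum>j<n. \<beta> i * \<beta> j * (\<Sum>l<M. v i l * v j l)) / \<sigma>\<^sup>2
         + (\<integral>y. g y \<partial>gauss_prod M \<sigma> a)\<^sup>2)
    \<le> (\<integral>y. (g y)\<^sup>2 \<partial>gauss_prod M \<sigma> m)"
  proof (rule gauss_second_moment_ge_derivative[OF \<sigma> g_meas g_sq])
    show "integrable (gauss_prod M \<sigma> a) g" using mean(1)[OF xt] unfolding a_def .
    show "integrable (gauss_prod M \<sigma> (\<lambda>l. a l + t * v i l)) g" if "i < n" for i t
      unfolding line_mean[OF that] using mean(1)[OF line[OF that]] .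
    show "((\<lambda>t. \<integral>y. g y \<partial>gauss_prod M \<sigma> (\<lambda>l. a l + t * v i l)) has_real_derivative d i) (at 0)"
      if "i < n" for i
      unfolding line_mean[OF that] mean(2)[OF line[OF that]] using deriv[OF that] .
    show "(\<Sum>l<M. (a l - m l) * v i l) = 0" if "i < n" for i
      using sum_eq[OF that] orth[OF that] by simp
  qed
  moreover have "(\<Sum>l<M. (a l - m l)\<^sup>2) = (H *\<^sub>v x0 - H *\<^sub>v xt) \<bullet> (H *\<^sub>v x0 - H *\<^sub>v xt)"
    using H x0c xtc
    by (simp add: scalar_prod_eq_sum_lessThan[of _ M] a_def m_def power2_eq_square algebra_simps)
  moreover have "(\<Sum>l<M. v i l * v j l) = (H *\<^sub>v e i) \<bullet> (H *\<^sub>v e j)" if "j < n" for i j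
    using H e[OF that] by (simp add: scalar_prod_eq_sum_lessThan[of _ M] v_def)
  moreover have "est_variance H \<sigma> x0 g = (\<integral>y. (g y)\<^sup>2 \<partial>gauss_prod M \<sigma> m) - (c x0 + x0 $ k)\<^sup>2"
    using est_variance_eq_second_moment[OF \<sigma> H] mean[OF x0] g_sq
    unfolding obs expect_def m_def by simp
  ultimately show ?thesis
    using mean(2)[OF xt] unfolding a_def by simp
qed

section \<open>Sparse vectors and column submatrices\<close>

lemma sparse_setI:
  assumes "x \<in> carrier_vec N" "supp_vec x \<subseteq> K" "finite K" "card K \<le> S"
  shows "x \<in> sparse_set N S"
  using assms card_mono[OF assms(3,2)] unfolding sparse_set_def by simp

lemma sparse_kernel_eq_zero:
  assumes H: "H \<in> carrier_mat M N" and spark: "enat S < spark H"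
    and d: "d \<in> carrier_vec N" "H *\<^sub>v d = 0\<^sub>v M" "card (supp_vec d) \<le> S"
  shows "d = 0\<^sub>v N"
proof (rule ccontr)
  assume "d \<noteq> 0\<^sub>v N"
  then have "spark H \<le> enat (card (supp_vec d))"
    unfolding spark_def using H d by (intro INF_lower) auto
  also have "\<dots> \<le> enat S" using d(3) by simp
  finally show False using spark by simp
qed

lemma sparse_preimage_unique:
  assumes H: "H \<in> carrier_mat M N" and spark: "enat S < spark H"
    and K: "finite K" "card K \<le> S"
    and x: "x \<in> carrier_vec N" "supp_vec x \<subseteq> K" and y: "y \<in> carrier_vec N" "supp_vec y \<subseteq> K"
    and Hxy: "H *\<^sub>v x = H *\<^sub>v y"
  shows "x = y"
proof -
  have "supp_vec (x - y) \<subseteq> supp_vec x \<union> supp_vec y" using x y unfolding supp_vec_def by auto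
  then have "supp_vec (x - y) \<subseteq> K" using x y by blast
  then have "card (supp_vec (x - y)) \<le> S"
    using card_mono[OF K(1)] K(2) le_trans by blast
  moreover have "H *\<^sub>v (x - y) = 0\<^sub>v M"
    using H x y Hxy by (simp add: mult_minus_distrib_mat_vec)
  ultimately have "x - y = 0\<^sub>v N" using sparse_kernel_eq_zero[OF H spark] x y by simp
  show ?thesis
  proof (rule eq_vecI)
    fix i assume "i < dim_vec y"
    then have "(x - y) $ i = 0" using \<open>x - y = 0\<^sub>v N\<close> y by simp
    then show "x $ i = y $ i" using x y \<open>i < dim_vec y\<close> by simp
  qed (use x y in simp)
qed

lemma sorted_list_of_set_nth_mem:
  "finite K \<Longrightarrow> i < card K \<Longrightarrow> sorted_list_of_set K ! i \<in> K"
  by (metis length_sorted_list_of_set nth_mem set_sorted_list_of_set)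

definition embed_vec :: "nat \<Rightarrow> nat set \<Rightarrow> real vec \<Rightarrow> real vec" where
  "embed_vec N K \<theta> = vec N (\<lambda>j. \<Sum>i<card K. if j = sorted_list_of_set K ! i then \<theta> $ i else 0)"

lemma embed_vec_carrier[simp]: "embed_vec N K \<theta> \<in> carrier_vec N"
  unfolding embed_vec_def by simp

lemma supp_embed_vec:
  assumes "finite K"
  shows "supp_vec (embed_vec N K \<theta>) \<subseteq> K"
proof
  fix j assume "j \<in> supp_vec (embed_vec N K \<theta>)"
  then have "(\<Sum>i<card K. if j = sorted_list_of_set K ! i then \<theta> $ i else 0) \<noteq> 0"
    unfolding supp_vec_def embed_vec_def by auto
  then have "\<exists>i<card K. j = sorted_list_of_set K ! i"
    by (rule contrapos_np) (auto intro: sum.neutral)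
  then show "j \<in> K" using sorted_list_of_set_nth_mem[OF assms] by blast
qed

lemma embed_vec_nth:
  assumes K: "finite K" "K \<subseteq> {..<N}" and i: "i < card K"
  shows "embed_vec N K \<theta> $ (sorted_list_of_set K ! i) = \<theta> $ i"
proof -
  let ?ks = "sorted_list_of_set K"
  have ki: "?ks ! i \<in> K" using sorted_list_of_set_nth_mem[OF K(1) i] .
  have "(\<Sum>i'<card K. if ?ks ! i = ?ks ! i' then \<theta> $ i' else 0) = (\<Sum>i'<card K. if i' = i then \<theta> $ i' else 0)"
    using i by (intro sum.cong refl) (auto simp: nth_eq_iff_index_eq)
  then show ?thesis using ki K i unfolding embed_vec_def by auto
qed

lemma mult_embed_vec:
  assumes H: "H \<in> carrier_mat M N" and K: "K \<subseteq> {..<N}" and \<theta>: "\<theta> \<in> carrier_vec (card K)"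
  shows "H *\<^sub>v embed_vec N K \<theta> = cols_sub H K *\<^sub>v \<theta>"
proof (rule eq_vecI)
  let ?ks = "sorted_list_of_set K"
  have finK: "finite K" using K finite_subset by blast
  have ksN: "?ks ! i < N" if "i < card K" for i
    using sorted_list_of_set_nth_mem[OF finK that] K by auto
  fix r assume "r < dim_vec (cols_sub H K *\<^sub>v \<theta>)"
  then have r: "r < M" using H by (simp add: cols_sub_def)
  have "(H *\<^sub>v embed_vec N K \<theta>) $ r
      = (\<Sum>j<N. H $$ (r, j) * (\<Sum>i<card K. if j = ?ks ! i then \<theta> $ i else 0))"
    using H r unfolding embed_vec_def by (simp add: scalar_prod_def atLeast0LessThan)
  also have "\<dots> = (\<Sum>i<card K. \<Sum>j<N. if j = ?ks ! i then H $$ (r, ?ks ! i) * \<theta> $ i else 0)"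
    unfolding sum_distrib_left by (subst sum.swap) (intro sum.cong refl, auto)
  also have "\<dots> = (\<Sum>i<card K. H $$ (r, ?ks ! i) * \<theta> $ i)"
    using ksN by (intro sum.cong refl) simp
  also have "\<dots> = (cols_sub H K *\<^sub>v \<theta>) $ r"
    using H r \<theta> by (simp add: cols_sub_def scalar_prod_def atLeast0LessThan row_def)
  finally show "(H *\<^sub>v embed_vec N K \<theta>) $ r = (cols_sub H K *\<^sub>v \<theta>) $ r" .
qed (use H in \<open>simp add: cols_sub_def\<close>)

lemma cols_sub_carrier: "H \<in> carrier_mat M N \<Longrightarrow> cols_sub H K \<in> carrier_mat M (card K)"
  unfolding cols_sub_def by simp

lemma mult_unit_vec_eq_col_cols_sub:
  assumes H: "H \<in> carrier_mat M N" and K: "K \<subseteq> {..<N}" and i: "i < card K"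
  shows "H *\<^sub>v unit_vec N (sorted_list_of_set K ! i) = col (cols_sub H K) i"
proof -
  have "sorted_list_of_set K ! i < N"
    using sorted_list_of_set_nth_mem[OF finite_subset[OF K] i] K by auto
  then show ?thesis
    using H i by (intro eq_vecI) (simp_all add: cols_sub_def)
qed

lemma cols_sub_mult_vec_eq_zero:
  assumes H: "H \<in> carrier_mat M N" and spark: "enat S < spark H"
    and K: "K \<subseteq> {..<N}" "card K \<le> S"
    and \<theta>: "\<theta> \<in> carrier_vec (card K)" and z: "cols_sub H K *\<^sub>v \<theta> = 0\<^sub>v M"
  shows "\<theta> = 0\<^sub>v (card K)"
proof (rule eq_vecI)
  have finK: "finite K" using K finite_subset by blast
  have "card (supp_vec (embed_vec N K \<theta>)) \<le> S"
    using card_mono[OF finK supp_embed_vec[OF finK, of N \<theta>]] K(2) by simp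
  then have emb0: "embed_vec N K \<theta> = 0\<^sub>v N"
    using sparse_kernel_eq_zero[OF H spark] mult_embed_vec[OF H K(1) \<theta>] z by simp
  fix i assume "i < dim_vec (0\<^sub>v (card K) :: real vec)"
  then have i: "i < card K" by simp
  have "sorted_list_of_set K ! i < N" using sorted_list_of_set_nth_mem[OF finK i] K(1) by auto
  then show "\<theta> $ i = 0\<^sub>v (card K) $ i"
    using embed_vec_nth[OF finK K(1) i, of \<theta>] i unfolding emb0 by simp
qed (use \<theta> in simp)

section \<open>Gram matrices and the pseudoinverse\<close>

lemma self_scalar_prod_eq_zero:
  fixes w :: "real vec"
  assumes w: "w \<in> carrier_vec m" and z: "w \<bullet> w = 0"
  shows "w = 0\<^sub>v m"
proof -
  have "(\<Sum>i\<in>{0..<m}. w $ i * w $ i) = 0" using z w by (simp add: scalar_prod_def)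
  then have "\<forall>i\<in>{0..<m}. w $ i * w $ i = 0"
    by (subst (asm) sum_nonneg_eq_0_iff) auto
  then show ?thesis using w by (intro eq_vecI) auto
qed

lemma gram_mat_invertible:
  fixes A :: "real mat"
  assumes A: "A \<in> carrier_mat m n"
    and inj: "\<And>\<theta>. \<theta> \<in> carrier_vec n \<Longrightarrow> A *\<^sub>v \<theta> = 0\<^sub>v m \<Longrightarrow> \<theta> = 0\<^sub>v n"
  obtains B where "B \<in> carrier_mat n n" "B * (transpose_mat A * A) = 1\<^sub>m n" "transpose_mat A * A * B = 1\<^sub>m n"
proof -
  define G where "G = transpose_mat A * A"
  have G: "G \<in> carrier_mat n n" using A unfolding G_def by simp
  have "det G \<noteq> 0"
  proof
    assume "det G = 0"
    then obtain v where v: "v \<in> carrier_vec n" "v \<noteq> 0\<^sub>v n" "G *\<^sub>v v = 0\<^sub>v n"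
      using det_0_iff_vec_prod_zero[OF G] by auto
    have Av: "A *\<^sub>v v \<in> carrier_vec m" using A v by simp
    have "G *\<^sub>v v = transpose_mat A *\<^sub>v (A *\<^sub>v v)"
      unfolding G_def using A v by (simp add: assoc_mult_mat_vec[of _ n m A n v])
    then have "(A *\<^sub>v v) \<bullet> (A *\<^sub>v v) = (G *\<^sub>v v) \<bullet> v"
      using transpose_vec_mult_scalar[OF A v(1) Av] by simp
    also have "\<dots> = 0" using v by simp
    finally have "A *\<^sub>v v = 0\<^sub>v m" by (rule self_scalar_prod_eq_zero[OF Av])
    then show False using inj v by auto
  qed
  from det_non_zero_imp_unit[OF G this] show thesis
    using that unfolding G_def Units_def ring_mat_def by auto
qed

lemma left_inverse_eq_right_inverse:
  fixes G B B' :: "real mat"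
  assumes G: "G \<in> carrier_mat n n" and B: "B \<in> carrier_mat n n" and B': "B' \<in> carrier_mat n n"
    and BG: "B * G = 1\<^sub>m n" and GB': "G * B' = 1\<^sub>m n"
  shows "B = B'"
proof -
  have "B = B * (G * B')" using GB' B by simp
  also have "\<dots> = (B * G) * B'" using G B B' by simp
  also have "\<dots> = B'" using BG B' by simp
  finally show ?thesis .
qed

lemma mat_inv_eqI:
  fixes G B :: "real mat"
  assumes G: "G \<in> carrier_mat n n" and B: "B \<in> carrier_mat n n"
    and BG: "B * G = 1\<^sub>m n" and GB: "G * B = 1\<^sub>m n"
  shows "mat_inv G = B"
  unfolding mat_inv_def
proof (rule the_equality)
  show "B \<in> carrier_mat (dim_row G) (dim_row G) \<and> G * B = 1\<^sub>m (dim_row G) \<and> B * G = 1\<^sub>m (dim_row G)"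
    using assms by simp
  fix B' assume "B' \<in> carrier_mat (dim_row G) (dim_row G) \<and> G * B' = 1\<^sub>m (dim_row G) \<and> B' * G = 1\<^sub>m (dim_row G)"
  then show "B' = B" using left_inverse_eq_right_inverse[OF G _ B _ GB] G by auto
qed

lemma inverse_of_symmetric_symmetric:
  fixes G B :: "real mat"
  assumes G: "G \<in> carrier_mat n n" and B: "B \<in> carrier_mat n n"
    and GB: "G * B = 1\<^sub>m n" and sym: "transpose_mat G = G"
  shows "transpose_mat B = B"
proof -
  have "transpose_mat B * G = 1\<^sub>m n"
    using transpose_mult[OF G B] GB sym by simp
  then show ?thesis using left_inverse_eq_right_inverse[of G n "transpose_mat B" B] G B GB by simp
qed

lemma gram_mult_eq_transpose_of_penrose:
  fixes A C :: "real mat"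
  assumes A: "A \<in> carrier_mat m n" and C: "C \<in> carrier_mat n m"
    and ACA: "A * C * A = A" and sym: "transpose_mat (A * C) = A * C"
  shows "transpose_mat A * A * C = transpose_mat A"
proof -
  have "transpose_mat A = transpose_mat (A * C * A)" using ACA by simp
  also have "\<dots> = transpose_mat A * transpose_mat (A * C)"
    using transpose_mult[of "A * C" m m A n] A C by simp
  also have "\<dots> = transpose_mat A * A * C" using A C sym by simp
  finally show ?thesis by simp
qed

lemma pinv_full_column_rank:
  fixes A B :: "real mat"
  assumes A: "A \<in> carrier_mat m n" and B: "B \<in> carrier_mat n n"
    and BG: "B * (transpose_mat A * A) = 1\<^sub>m n" and GB: "transpose_mat A * A * B = 1\<^sub>m n"
  shows "pinv A = B * transpose_mat A"
  unfolding pinv_def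
proof (rule the_equality)
  have At: "transpose_mat A \<in> carrier_mat n m" using A by simp
  have Bsym: "transpose_mat B = B"
    by (rule inverse_of_symmetric_symmetric[OF _ B GB]) (use A in \<open>simp_all add: transpose_mult[of _ n m _ n]\<close>)
  have C: "B * transpose_mat A \<in> carrier_mat n m" using B At by simp
  have BAA: "B * transpose_mat A * A = 1\<^sub>m n" using BG A B At by simp
  have penrose1: "A * (B * transpose_mat A) * A = A"
  proof -
    have "A * (B * transpose_mat A) * A = A * (B * transpose_mat A * A)"
      using A B At by (simp add: assoc_mult_mat[of _ m n _ m _ n])
    then show ?thesis using BAA A by simp
  qed
  have penrose2: "B * transpose_mat A * A * (B * transpose_mat A) = B * transpose_mat A"
    using BAA left_mult_one_mat[OF C] by simp
  have penrose3: "transpose_mat (A * (B * transpose_mat A)) = A * (B * transpose_mat A)"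
  proof -
    have "transpose_mat (A * (B * transpose_mat A)) = transpose_mat (B * transpose_mat A) * transpose_mat A"
      using transpose_mult[OF A C] .
    also have "transpose_mat (B * transpose_mat A) = A * B"
      using transpose_mult[OF B At] Bsym by simp
    finally show ?thesis using A B At by simp
  qed
  have penrose4: "transpose_mat (B * transpose_mat A * A) = B * transpose_mat A * A"
    using BAA by simp
  show "B * transpose_mat A \<in> carrier_mat (dim_col A) (dim_row A) \<and> A * (B * transpose_mat A) * A = A \<and>
    B * transpose_mat A * A * (B * transpose_mat A) = B * transpose_mat A \<and>
    transpose_mat (A * (B * transpose_mat A)) = A * (B * transpose_mat A) \<and>
    transpose_mat (B * transpose_mat A * A) = B * transpose_mat A * A"
    using C A penrose1 penrose2 penrose3 penrose4 by simp
  fix C' assume "C' \<in> carrier_mat (dim_col A) (dim_row A) \<and> A * C' * A = A \<and> C' * A * C' = C' \<and>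
    transpose_mat (A * C') = A * C' \<and> transpose_mat (C' * A) = C' * A"
  then have C': "C' \<in> carrier_mat n m" "A * C' * A = A" "transpose_mat (A * C') = A * C'" using A by auto
  have "B * transpose_mat A = B * (transpose_mat A * A * C')"
    using gram_mult_eq_transpose_of_penrose[OF A C'] by simp
  also have "\<dots> = (B * (transpose_mat A * A)) * C'"
    using A At B C' by (simp add: assoc_mult_mat[of B n n "transpose_mat A * A" n C' m])
  also have "\<dots> = C'" using BG C' by simp
  finally show "C' = B * transpose_mat A" by simp
qed

lemma transpose_mult_projection:
  fixes A B :: "real mat"
  assumes A: "A \<in> carrier_mat m n" and B: "B \<in> carrier_mat n n" and GB: "transpose_mat A * A * B = 1\<^sub>m n"
  shows "transpose_mat A * (A * (B * transpose_mat A)) = transpose_mat A"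
proof -
  have "transpose_mat A * (A * (B * transpose_mat A)) = transpose_mat A * A * B * transpose_mat A"
    using A B by (simp add: assoc_mult_mat[of _ n m _ n _ m] assoc_mult_mat[of _ n n _ n _ m])
  then show ?thesis using GB A by simp
qed

lemma projection_residual_orthogonal:
  fixes A B :: "real mat"
  assumes A: "A \<in> carrier_mat m n" and B: "B \<in> carrier_mat n n" and GB: "transpose_mat A * A * B = 1\<^sub>m n"
    and u: "u \<in> carrier_vec m"
  shows "transpose_mat A *\<^sub>v ((1\<^sub>m m - A * (B * transpose_mat A)) *\<^sub>v u) = 0\<^sub>v n"
proof -
  define P where "P = A * (B * transpose_mat A)"
  have P: "P \<in> carrier_mat m m" unfolding P_def using A B by simp
  have "transpose_mat A *\<^sub>v ((1\<^sub>m m - P) *\<^sub>v u) = transpose_mat A *\<^sub>v u - (transpose_mat A * P) *\<^sub>v u"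
    using A P u
    by (simp add: minus_mult_distrib_mat_vec[OF one_carrier_mat P u]
          mult_minus_distrib_mat_vec[of _ n m] assoc_mult_mat_vec[of _ n m _ m])
  also have "transpose_mat A * P = transpose_mat A"
    unfolding P_def by (rule transpose_mult_projection[OF A B GB])
  finally show ?thesis unfolding P_def using A u by simp
qed

lemma sparse_projection_preimage_unique:
  assumes H: "H \<in> carrier_mat M N" and spark: "enat S < spark H" and K: "K \<subseteq> {..<N}" "card K \<le> S"
    and B: "B \<in> carrier_mat (card K) (card K)"
    and GB: "transpose_mat (cols_sub H K) * cols_sub H K * B = 1\<^sub>m (card K)"
    and u: "u \<in> carrier_vec M"
  defines "P \<equiv> cols_sub H K * (B * transpose_mat (cols_sub H K))"
  shows "\<exists>!x. x \<in> carrier_vec N \<and> supp_vec x \<subseteq> K \<and> H *\<^sub>v x = P *\<^sub>v u"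
proof (rule ex_ex1I)
  define HK where "HK = cols_sub H K"
  have finK: "finite K" using K finite_subset by blast
  have HK: "HK \<in> carrier_mat M (card K)" unfolding HK_def using cols_sub_carrier[OF H] .
  define \<theta> where "\<theta> = B *\<^sub>v (transpose_mat HK *\<^sub>v u)"
  have \<theta>: "\<theta> \<in> carrier_vec (card K)" unfolding \<theta>_def using B HK u by simp
  have "H *\<^sub>v embed_vec N K \<theta> = HK *\<^sub>v \<theta>"
    using mult_embed_vec[OF H K(1) \<theta>] unfolding HK_def .
  also have "\<dots> = P *\<^sub>v u"
    unfolding P_def HK_def[symmetric] \<theta>_def using HK B u
    by (simp add: assoc_mult_mat_vec[of _ M "card K" _ M] assoc_mult_mat_vec[of _ "card K" "card K" _ M])
  finally have "H *\<^sub>v embed_vec N K \<theta> = P *\<^sub>v u" .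
  then show "\<exists>x. x \<in> carrier_vec N \<and> supp_vec x \<subseteq> K \<and> H *\<^sub>v x = P *\<^sub>v u"
    using supp_embed_vec[OF finK] embed_vec_carrier by blast
qed (use sparse_preimage_unique[OF H spark finite_subset[OF K(1)] K(2)] in auto)

lemma supp_vec_add_smult_unit:
  assumes "x \<in> carrier_vec N"
  shows "supp_vec (x + t \<cdot>\<^sub>v unit_vec N j) \<subseteq> insert j (supp_vec x)"
  using assms unfolding supp_vec_def unit_vec_def by auto

lemma has_real_derivative_add_coordinate:
  assumes c: "((\<lambda>t. c (x + t \<cdot>\<^sub>v unit_vec N j)) has_real_derivative D) (at 0)"
    and x: "x \<in> carrier_vec N" and k: "k < N"
  shows "((\<lambda>t. c (x + t \<cdot>\<^sub>v unit_vec N j) + (x + t \<cdot>\<^sub>v unit_vec N j) $ k)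
      has_real_derivative (if k = j then 1 else 0) + D) (at 0)"
proof -
  define \<delta> where "\<delta> = (if k = j then 1 else (0::real))"
  have eq: "(\<lambda>t. c (x + t \<cdot>\<^sub>v unit_vec N j) + (x + t \<cdot>\<^sub>v unit_vec N j) $ k)
      = (\<lambda>t. c (x + t \<cdot>\<^sub>v unit_vec N j) + (x $ k + t * \<delta>))"
    using x k by (auto simp: unit_vec_def \<delta>_def)
  have "((\<lambda>t. c (x + t \<cdot>\<^sub>v unit_vec N j) + (x $ k + t * \<delta>)) has_real_derivative D + \<delta>) (at 0)"
    by (rule DERIV_add[OF c]) (auto intro!: derivative_eq_intros)
  then show ?thesis unfolding eq \<delta>_def by (simp add: add.commute)
qed

lemma quadratic_form_at_inverse:
  fixes G B :: "real mat" and b :: "real vec"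
  assumes G: "G \<in> carrier_mat n n" and B: "B \<in> carrier_mat n n" and GB: "G * B = 1\<^sub>m n"
    and b: "b \<in> carrier_vec n" and s: "s \<noteq> 0"
  defines "\<beta> \<equiv> \<lambda>i. s * (B *\<^sub>v b) $ i"
  shows "2 * (\<Sum>i<n. \<beta> i * b $ i) - (\<Sum>i<n. \<Sum>j<n. \<beta> i * \<beta> j * G $$ (i, j)) / s
    = s * (b \<bullet> (B *\<^sub>v b))"
proof -
  define w where "w = B *\<^sub>v b"
  have w: "w \<in> carrier_vec n" unfolding w_def using B b by simp
  have Gw: "G *\<^sub>v w = b"
    unfolding w_def using G B b GB by (simp add: assoc_mult_mat_vec[symmetric, of _ n n _ n])
  have row: "(\<Sum>j<n. G $$ (i, j) * w $ j) = b $ i" if "i < n" for i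
  proof -
    have "(G *\<^sub>v w) $ i = (\<Sum>j<n. G $$ (i, j) * w $ j)"
      using that G w by (simp add: scalar_prod_def atLeast0LessThan)
    then show ?thesis using Gw by simp
  qed
  have "(\<Sum>i<n. \<Sum>j<n. \<beta> i * \<beta> j * G $$ (i, j)) = (\<Sum>i<n. s * s * (w $ i * (\<Sum>j<n. G $$ (i, j) * w $ j)))"
    unfolding \<beta>_def w_def[symmetric] by (simp add: sum_distrib_left mult_ac)
  also have "\<dots> = s * s * (\<Sum>i<n. w $ i * b $ i)"
    by (simp add: row sum_distrib_left)
  finally have quad: "(\<Sum>i<n. \<Sum>j<n. \<beta> i * \<beta> j * G $$ (i, j)) = s * s * (b \<bullet> w)"
    using w by (simp add: scalar_prod_eq_sum_lessThan mult.commute)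
  have lin: "(\<Sum>i<n. \<beta> i * b $ i) = s * (b \<bullet> w)"
    unfolding \<beta>_def w_def[symmetric] using w
    by (simp add: scalar_prod_eq_sum_lessThan sum_distrib_left mult_ac)
  show ?thesis unfolding quad lin w_def[symmetric] using s by simp
qed

lemma cols_sub_gram_inverse:
  assumes H: "H \<in> carrier_mat M N" and spark: "enat S < spark H"
    and K: "K \<subseteq> {..<N}" "card K \<le> S"
  obtains B where "B \<in> carrier_mat (card K) (card K)"
    and "transpose_mat (cols_sub H K) * cols_sub H K * B = 1\<^sub>m (card K)"
    and "mat_inv (transpose_mat (cols_sub H K) * cols_sub H K) = B"
    and "pinv (cols_sub H K) = B * transpose_mat (cols_sub H K)"
proof -
  have A: "cols_sub H K \<in> carrier_mat M (card K)" by (rule cols_sub_carrier[OF H])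
  obtain B where B: "B \<in> carrier_mat (card K) (card K)"
    and BG: "B * (transpose_mat (cols_sub H K) * cols_sub H K) = 1\<^sub>m (card K)"
    and GB: "transpose_mat (cols_sub H K) * cols_sub H K * B = 1\<^sub>m (card K)"
    by (rule gram_mat_invertible[OF A cols_sub_mult_vec_eq_zero[OF H spark K]])
  have "transpose_mat (cols_sub H K) * cols_sub H K \<in> carrier_mat (card K) (card K)" using A by simp
  from mat_inv_eqI[OF this B BG GB] pinv_full_column_rank[OF A B BG GB] show thesis
    using that B GB by blast
qed

lemma min_var_ge_coordinate_directions:
  fixes H :: "real mat" and js :: "nat \<Rightarrow> nat" and dc \<beta> :: "nat \<Rightarrow> real"
  assumes H: "H \<in> carrier_mat M N" and \<sigma>: "\<sigma> > 0" and k: "k < N"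
    and x0: "x0 \<in> sparse_set N S"
    and xt: "xt \<in> carrier_vec N" "supp_vec xt \<subseteq> K" and K: "finite K" "card K \<le> S"
    and js: "\<And>i. i < n \<Longrightarrow> js i \<in> K"
    and dc: "\<And>i. i < n \<Longrightarrow> ((\<lambda>t. c (xt + t \<cdot>\<^sub>v unit_vec N (js i))) has_real_derivative dc i) (at 0)"
    and orth: "\<And>i. i < n \<Longrightarrow> (H *\<^sub>v unit_vec N (js i)) \<bullet> (H *\<^sub>v x0 - H *\<^sub>v xt) = 0"
  defines "d \<equiv> \<lambda>i. (if k = js i then 1 else 0) + dc i"
  shows "ereal (exp (- ((H *\<^sub>v x0 - H *\<^sub>v xt) \<bullet> (H *\<^sub>v x0 - H *\<^sub>v xt)) / \<sigma>\<^sup>2)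
      * (2 * (\<Sum>i<n. \<beta> i * d i)
         - (\<Sum>i<n. \<Sum>j<n. \<beta> i * \<beta> j * ((H *\<^sub>v unit_vec N (js i)) \<bullet> (H *\<^sub>v unit_vec N (js j)))) / \<sigma>\<^sup>2
         + (c xt + xt $ k)\<^sup>2)
      - (c x0 + x0 $ k)\<^sup>2) \<le> min_var H \<sigma> S k c x0"
  unfolding min_var_def
proof (rule INF_greatest, unfold ereal_less_eq(3))
  fix g assume g: "g \<in> admissible_est H \<sigma> S k c x0"
  show "exp (- ((H *\<^sub>v x0 - H *\<^sub>v xt) \<bullet> (H *\<^sub>v x0 - H *\<^sub>v xt)) / \<sigma>\<^sup>2)
      * (2 * (\<Sum>i<n. \<beta> i * d i)
         - (\<Sum>i<n. \<Sum>j<n. \<beta> i * \<beta> j * ((H *\<^sub>v unit_vec N (js i)) \<bullet> (H *\<^sub>v unit_vec N (js j)))) / \<sigma>\<^sup>2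
         + (c xt + xt $ k)\<^sup>2)
      - (c x0 + x0 $ k)\<^sup>2 \<le> est_variance H \<sigma> x0 g"
  proof (rule admissible_est_variance_ge[OF H \<sigma> g x0 sparse_setI[OF xt K]])
    show "xt + t \<cdot>\<^sub>v unit_vec N (js i) \<in> sparse_set N S" if "i < n" for i t
    proof (rule sparse_setI[OF _ _ K])
      show "supp_vec (xt + t \<cdot>\<^sub>v unit_vec N (js i)) \<subseteq> K"
        using supp_vec_add_smult_unit[OF xt(1)] xt(2) js[OF that] by blast
    qed (use xt(1) in simp)
    show "((\<lambda>t. c (xt + t \<cdot>\<^sub>v unit_vec N (js i)) + (xt + t \<cdot>\<^sub>v unit_vec N (js i)) $ k)
        has_real_derivative d i) (at 0)" if "i < n" for i
      unfolding d_def by (rule has_real_derivative_add_coordinate[OF dc[OF that] xt(1) k])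
  qed (use orth in simp_all)
qed

theorem theorem8:
  fixes N M S k :: nat and H :: "real mat" and \<sigma> :: real and x0 :: "real vec"
    and K :: "nat set" and c :: "real vec \<Rightarrow> real" and dc :: "nat \<Rightarrow> real"
  assumes "1 \<le> S" "S \<le> N"
    and "H \<in> carrier_mat M N"
    and "enat S < spark H"
    and "\<sigma> > 0"
    and "k < N"
    and "x0 \<in> sparse_set N S"
    and "K \<subseteq> {..<N}" "card K \<le> S"
  defines "P \<equiv> cols_sub H K * pinv (cols_sub H K)"
  defines "xt \<equiv> THE xt. xt \<in> carrier_vec N \<and> supp_vec xt \<subseteq> K \<and> H *\<^sub>v xt = P *\<^sub>v (H *\<^sub>v x0)"
  assumes "\<forall>i < card K. ((\<lambda>t. c (xt + t \<cdot>\<^sub>v unit_vec N (sorted_list_of_set K ! i)))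
              has_real_derivative dc i) (at 0)"
  defines "\<gamma> \<equiv> (\<lambda>x. c x + x $ k)"
  defines "b \<equiv> vec (card K) (\<lambda>i. (if k = sorted_list_of_set K ! i then 1 else 0) + dc i)"
  defines "r \<equiv> (1\<^sub>m M - P) *\<^sub>v (H *\<^sub>v x0)"
  shows "min_var H \<sigma> S k c x0 \<ge>
    ereal (exp (- (scalar_prod r r) / \<sigma>\<^sup>2)
      * (\<sigma>\<^sup>2 * (scalar_prod b (mat_inv (transpose_mat (cols_sub H K) * cols_sub H K) *\<^sub>v b)) + (\<gamma> xt)\<^sup>2)
      - (\<gamma> x0)\<^sup>2)"
proof -
  note H = assms(3) and spark = assms(4) and \<sigma> = assms(5) and kN = assms(6) and x0 = assms(7)
    and K = assms(8,9) and deriv_c = assms(12)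
  define n where "n = card K"
  define HK where "HK = cols_sub H K"
  define ks where "ks = sorted_list_of_set K"
  define u where "u = H *\<^sub>v x0"
  have finK: "finite K" using K(1) finite_subset by blast
  have HK: "HK \<in> carrier_mat M n" unfolding HK_def n_def by (rule cols_sub_carrier[OF H])
  have u: "u \<in> carrier_vec M" unfolding u_def using H x0 by (simp add: sparse_set_def)
  obtain B where B: "B \<in> carrier_mat n n" and GB: "transpose_mat HK * HK * B = 1\<^sub>m n"
    and minv: "mat_inv (transpose_mat HK * HK) = B" and P: "P = HK * (B * transpose_mat HK)"
    using cols_sub_gram_inverse[OF H spark K] unfolding P_def HK_def n_def by metis
  have "xt \<in> carrier_vec N \<and> supp_vec xt \<subseteq> K \<and> H *\<^sub>v xt = P *\<^sub>v u"
    unfolding xt_def u_def[symmetric] P HK_def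
    by (rule theI'[OF sparse_projection_preimage_unique[OF H spark K _ _ u]])
       (use B GB in \<open>simp_all add: HK_def n_def\<close>)
  then have xt: "xt \<in> carrier_vec N" "supp_vec xt \<subseteq> K" and Hxt: "H *\<^sub>v xt = P *\<^sub>v u" by auto
  have "P \<in> carrier_mat M M" unfolding P using HK B by simp
  then have r: "r = u - H *\<^sub>v xt"
    unfolding r_def u_def[symmetric] Hxt using u by (simp add: minus_mult_distrib_mat_vec[OF one_carrier_mat])
  have He: "H *\<^sub>v unit_vec N (ks ! i) = col HK i" if "i < n" for i
    using mult_unit_vec_eq_col_cols_sub[OF H K(1)] that unfolding ks_def HK_def n_def by simp
  have "transpose_mat HK *\<^sub>v r = 0\<^sub>v n"
    unfolding r_def P u_def[symmetric] by (rule projection_residual_orthogonal[OF HK B GB u])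
  then have "(transpose_mat HK *\<^sub>v r) $ i = 0" if "i < n" for i using that by simp
  then have orth: "(H *\<^sub>v unit_vec N (ks ! i)) \<bullet> (H *\<^sub>v x0 - H *\<^sub>v xt) = 0" if "i < n" for i
    using He[OF that] HK that unfolding r u_def by simp
  define d where "d i = (if k = ks ! i then 1 else 0) + dc i" for i
  define \<beta> where "\<beta> i = \<sigma>\<^sup>2 * (B *\<^sub>v b) $ i" for i
  have "2 * (\<Sum>i<n. \<beta> i * b $ i) - (\<Sum>i<n. \<Sum>j<n. \<beta> i * \<beta> j * (transpose_mat HK * HK) $$ (i, j)) / \<sigma>\<^sup>2
      = \<sigma>\<^sup>2 * (b \<bullet> (B *\<^sub>v b))"
    using quadratic_form_at_inverse[OF _ B GB, of b "\<sigma>\<^sup>2"] HK \<sigma> unfolding \<beta>_def b_def n_def by simp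
  moreover have "(\<Sum>i<n. \<beta> i * b $ i) = (\<Sum>i<n. \<beta> i * d i)"
    unfolding b_def d_def ks_def n_def by simp
  moreover have "(\<Sum>i<n. \<Sum>j<n. \<beta> i * \<beta> j * (transpose_mat HK * HK) $$ (i, j))
      = (\<Sum>i<n. \<Sum>j<n. \<beta> i * \<beta> j * ((H *\<^sub>v unit_vec N (ks ! i)) \<bullet> (H *\<^sub>v unit_vec N (ks ! j))))"
    using HK by (intro sum.cong refl) (simp add: He)
  moreover have "ereal (exp (- ((H *\<^sub>v x0 - H *\<^sub>v xt) \<bullet> (H *\<^sub>v x0 - H *\<^sub>v xt)) / \<sigma>\<^sup>2)
      * (2 * (\<Sum>i<n. \<beta> i * d i)
         - (\<Sum>i<n. \<Sum>j<n. \<beta> i * \<beta> j * ((H *\<^sub>v unit_vec N (ks ! i)) \<bullet> (H *\<^sub>v unit_vec N (ks ! j)))) / \<sigma>\<^sup>2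
         + (c xt + xt $ k)\<^sup>2)
      - (c x0 + x0 $ k)\<^sup>2) \<le> min_var H \<sigma> S k c x0"
    unfolding d_def
    by (rule min_var_ge_coordinate_directions[OF H \<sigma> kN x0 xt finK K(2)])
       (use sorted_list_of_set_nth_mem[OF finK] deriv_c orth in \<open>simp_all add: ks_def n_def\<close>)
  ultimately show ?thesis
    unfolding HK_def[symmetric] minv r u_def \<gamma>_def by simp
qed

end
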